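(* For all integers $n,m,k\ge 0$, the number of Dyck paths of semilength $n$ with $m$ contacts and $k$ up-steps at odd height equals the number of Dyck paths of semilength $n$ with $m$ contacts and $k$ peaks.
   Context: Paths have steps $(1,1)$ (up-steps) and $(1,-1)$ (down-steps) and start at $(0,0)$. A Dyck path ends on the line $y=0$ and has no vertex with negative $y$-coordinate. The semilength is half the number of steps. An up-step is at height $j$ if it goes from $(i-1,j-1)$ to $(i,j)$; a down-step is at height $j$ if it goes from $(i,j)$ to $(i+1,j-1)$; it is at odd height if $j$ is odd. A peak is an up-step immediately followed by a down-step. A contact is a down-step at height $1$ or an up-step at height $0$. *)

theory Defs
  imports Main
begin

(* A lattice path is a list of steps: True = up-step (1,1), False = down-step (1,-1). *)
type_synonym path = "bool list"

definition ht :: "path \<Rightarrow> nat \<Rightarrow> int" where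
  "ht p i = (\<Sum>j<i. if p ! j then 1 else -1)"

definition dyck :: "path \<Rightarrow> bool" where
  "dyck p \<longleftrightarrow> ht p (length p) = 0 \<and> (\<forall>i\<le>length p. ht p i \<ge> 0)"

definition semilength :: "path \<Rightarrow> nat" where
  "semilength p = length p div 2"

(* height of step i (0-based): an up-step from (i,h) to (i+1,h+1) has height h+1;
   a down-step from (i,h) to (i+1,h-1) has height h *)
definition step_height :: "path \<Rightarrow> nat \<Rightarrow> int" where
  "step_height p i = (if p ! i then ht p i + 1 else ht p i)"

definition odd_up_steps :: "path \<Rightarrow> nat" where
  "odd_up_steps p = card {i. i < length p \<and> p ! i \<and> odd (step_height p i)}"

definition peaks :: "path \<Rightarrow> nat" where
  "peaks p = card {i. Suc i < length p \<and> p ! i \<and> \<not> p ! Suc i}"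

definition contacts :: "path \<Rightarrow> nat" where
  "contacts p = card {i. i < length p \<and>
     ((\<not> p ! i \<and> step_height p i = 1) \<or> (p ! i \<and> step_height p i = 0))}"

definition dyck_paths :: "nat \<Rightarrow> path set" where
  "dyck_paths n = {p. dyck p \<and> semilength p = n}"

end

theory Submission imports Defs begin

text \<open>
  Under the first-return decomposition \<open>U l D r\<close>, Dyck paths are binary trees; the contacts are
  the nodes of the right spine and the peaks are the leaves that are left children. The first
  up-step of an arch lies at height 1, and lifting \<open>l\<close> by one swaps odd and even up-steps, so the
  odd up-steps satisfy \<open>o(Node l r) = 1 + (|l| - o(l)) + o(r)\<close>. Since left and right leaves of a
  nonempty tree together number \<open>|t| + 1\<close>, mirroring the recursively transformed left subtree
  makes the left-leaf count obey the same recursion. This map fixes the right spine and is a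
  bijection on trees of each size.
\<close>

section \<open>Dyck paths as encoded trees\<close>

datatype tree = Leaf | Node tree tree

fun encode :: "tree \<Rightarrow> path" where
  "encode Leaf = []"
| "encode (Node l r) = True # encode l @ False # encode r"

lemma length_encode [simp]: "length (encode t) = 2 * size t"
  by (induction t) auto

lemma encode_append_False_inj:
  "encode s @ False # xs = encode t @ False # ys \<Longrightarrow> s = t \<and> xs = ys"
proof (induction s arbitrary: t xs ys)
  case Leaf
  then show ?case by (cases t) auto
next
  case (Node a b)
  from Node.prems obtain c d where t: "t = Node c d" by (cases t) auto
  with Node.prems have "encode a @ False # (encode b @ False # xs)
                      = encode c @ False # (encode d @ False # ys)" by simp
  then have "a = c" and "encode b @ False # xs = encode d @ False # ys"
    using Node.IH(1) by blast+
  then show ?case using Node.IH(2) t by simp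
qed

lemma inj_encode: "inj encode"
  by (rule injI) (use encode_append_False_inj[of _ "[]" _ "[]"] in auto)

lemma finite_trees_of_size: "finite {t :: tree. size t = n}"
proof (rule finite_imageD)
  have "encode ` {t. size t = n} \<subseteq> {xs. set xs \<subseteq> UNIV \<and> length xs = 2 * n}" by auto
  then show "finite (encode ` {t. size t = n})"
    by (rule finite_subset) (rule finite_lists_length_eq[of "UNIV :: bool set"], simp)
  show "inj_on encode {t. size t = n}" using inj_encode by (simp add: inj_on_def inj_def)
qed

lemma ht_0 [simp]: "ht p 0 = 0"
  by (simp add: ht_def)

lemma ht_Cons_Suc [simp]: "ht (x # xs) (Suc i) = (if x then 1 else -1) + ht xs i"
  unfolding ht_def sum.lessThan_Suc_shift by simp

lemma step_height_Cons_0 [simp]: "step_height (x # xs) 0 = (if x then 1 else 0)"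
  by (simp add: step_height_def)

lemma step_height_Cons_Suc [simp]:
  "step_height (x # xs) (Suc i) = (if x then 1 else -1) + step_height xs i"
  by (simp add: step_height_def)

fun dyck_from :: "int \<Rightarrow> path \<Rightarrow> bool" where
  "dyck_from h [] \<longleftrightarrow> h = 0"
| "dyck_from h (True # xs) \<longleftrightarrow> dyck_from (h + 1) xs"
| "dyck_from h (False # xs) \<longleftrightarrow> 1 \<le> h \<and> dyck_from (h - 1) xs"

lemma all_le_Suc_iff: "(\<forall>i\<le>Suc n. P i) \<longleftrightarrow> P 0 \<and> (\<forall>i\<le>n. P (Suc i))"
  by (metis Suc_le_mono le0 not0_implies_Suc)

lemma dyck_from_iff_ht:
  "0 \<le> h \<Longrightarrow> dyck_from h p \<longleftrightarrow> h + ht p (length p) = 0 \<and> (\<forall>i\<le>length p. 0 \<le> h + ht p i)"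
proof (induction p arbitrary: h)
  case Nil
  then show ?case by auto
next
  case (Cons x xs)
  show ?case
  proof (cases "x \<or> 1 \<le> h")
    case True
    then have "0 \<le> (if x then h + 1 else h - 1)" using Cons.prems by auto
    note IH = Cons.IH[OF this]
    show ?thesis
    proof (cases x)
      case True
      with IH Cons.prems show ?thesis
        by (simp only: all_le_Suc_iff length_Cons dyck_from.simps ht_Cons_Suc ht_0 if_True)
          (auto simp: algebra_simps)
    next
      case False
      with IH \<open>x \<or> 1 \<le> h\<close> show ?thesis
        by (simp only: all_le_Suc_iff length_Cons dyck_from.simps ht_Cons_Suc ht_0 if_False)
          (auto simp: algebra_simps)
    qed
  next
    case False
    then have "\<not> 0 \<le> h + ht (x # xs) (Suc 0)" by simp
    with False show ?thesis by (auto simp del: ht_Cons_Suc)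
  qed
qed

lemma dyck_iff_dyck_from: "dyck p \<longleftrightarrow> dyck_from 0 p"
  using dyck_from_iff_ht[of 0 p] by (simp add: dyck_def)

lemma dyck_from_encode_append: "0 \<le> h \<Longrightarrow> dyck_from h (encode t @ ys) = dyck_from h ys"
  by (induction t arbitrary: h ys) auto

fun encode_forest :: "tree list \<Rightarrow> path" where
  "encode_forest [] = []"
| "encode_forest [t] = encode t"
| "encode_forest (t # u # ts) = encode t @ False # encode_forest (u # ts)"

text \<open>A path from height \<open>h\<close> to 0 splits at its first descents below \<open>h, h - 1, \<dots>, 1\<close>.\<close>

lemma dyck_from_imp_encode_forest:
  "dyck_from (int h) p \<Longrightarrow> \<exists>ts. length ts = Suc h \<and> p = encode_forest ts"
proof (induction p arbitrary: h)
  case Nil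
  then show ?case by (intro exI[of _ "[Leaf]"]) auto
next
  case (Cons x xs)
  show ?case
  proof (cases x)
    case True
    with Cons.prems have "dyck_from (int (Suc h)) xs" by (simp add: add.commute)
    from Cons.IH[OF this] obtain a b rest
      where ts: "xs = encode_forest (a # b # rest)" "length rest = h"
      by (auto simp: length_Suc_conv)
    show ?thesis
    proof (cases rest)
      case Nil
      with ts True show ?thesis by (intro exI[of _ "[Node a b]"]) auto
    next
      case (Cons c rs)
      with ts True show ?thesis by (intro exI[of _ "Node a b # rest"]) auto
    qed
  next
    case False
    with Cons.prems obtain h' where h': "h = Suc h'" "dyck_from (int h') xs"
      by (cases h) auto
    from Cons.IH[OF h'(2)] obtain a rest
      where "xs = encode_forest (a # rest)" "length rest = h'"
      by (auto simp: length_Suc_conv)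
    with h' False show ?thesis by (intro exI[of _ "Leaf # a # rest"]) auto
  qed
qed

lemma dyck_iff_in_range_encode: "dyck p \<longleftrightarrow> p \<in> range encode"
proof
  assume "dyck p"
  then show "p \<in> range encode"
    using dyck_from_imp_encode_forest[of 0 p] by (auto simp: dyck_iff_dyck_from length_Suc_conv)
qed (use dyck_from_encode_append[of 0 _ "[]"] in \<open>auto simp: dyck_iff_dyck_from\<close>)

lemma dyck_paths_filter_eq_image:
  "{p \<in> dyck_paths n. P p} = encode ` {t. size t = n \<and> P (encode t)}"
  by (auto simp: dyck_paths_def semilength_def dyck_iff_in_range_encode)

section \<open>Path statistics as tree statistics\<close>

text \<open>\<open>Q\<close> sees the height of each step, as in \<open>step_height\<close> but offset by \<open>h\<close>, and its direction.\<close>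

fun count_steps :: "(int \<Rightarrow> bool \<Rightarrow> bool) \<Rightarrow> int \<Rightarrow> path \<Rightarrow> nat" where
  "count_steps Q h [] = 0"
| "count_steps Q h (x # xs) =
     (if Q (if x then h + 1 else h) x then 1 else 0) + count_steps Q (if x then h + 1 else h - 1) xs"

lemma card_less_Suc_split:
  "card {i. i < Suc n \<and> P i} = (if P 0 then 1 else 0) + card {i. i < n \<and> P (Suc i)}"
proof -
  have "{i. i < Suc n \<and> P i} = {i. i = 0 \<and> P 0} \<union> Suc ` {i. i < n \<and> P (Suc i)}"
    by (auto simp: image_iff less_Suc_eq_0_disj)
  moreover have "card ({i::nat. i = 0 \<and> P 0} \<union> Suc ` {i. i < n \<and> P (Suc i)})
      = card {i::nat. i = 0 \<and> P 0} + card (Suc ` {i. i < n \<and> P (Suc i)})"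
    by (rule card_Un_disjoint) (auto intro: finite_subset[of _ "{0}"])
  moreover have "card (Suc ` {i. i < n \<and> P (Suc i)}) = card {i. i < n \<and> P (Suc i)}"
    by (simp add: card_image)
  ultimately show ?thesis by simp
qed

lemma card_steps_eq_count_steps:
  "card {i. i < length p \<and> Q (h + step_height p i) (p ! i)} = count_steps Q h p"
proof (induction p arbitrary: h)
  case Nil
  then show ?case by simp
next
  case (Cons x xs)
  have "card {i. i < length (x # xs) \<and> Q (h + step_height (x # xs) i) ((x # xs) ! i)}
     = (if Q (h + step_height (x # xs) 0) x then 1 else 0)
       + card {i. i < length xs \<and> Q ((if x then h + 1 else h - 1) + step_height xs i) (xs ! i)}"
    by (simp only: length_Cons card_less_Suc_split nth_Cons_0 nth_Cons_Suc step_height_Cons_Suc)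
      (simp add: algebra_simps)
  with Cons.IH show ?case by simp
qed

fun count_tree :: "(int \<Rightarrow> bool \<Rightarrow> bool) \<Rightarrow> int \<Rightarrow> tree \<Rightarrow> nat" where
  "count_tree Q h Leaf = 0"
| "count_tree Q h (Node l r) = (if Q (h + 1) True then 1 else 0) + count_tree Q (h + 1) l
     + (if Q (h + 1) False then 1 else 0) + count_tree Q h r"

lemma count_steps_encode_append:
  "count_steps Q h (encode t @ ys) = count_tree Q h t + count_steps Q h ys"
  by (induction t arbitrary: h ys) auto

lemma count_steps_encode: "count_steps Q h (encode t) = count_tree Q h t"
  using count_steps_encode_append[of Q h t "[]"] by simp

fun right_spine :: "tree \<Rightarrow> nat" where
  "right_spine Leaf = 0"
| "right_spine (Node l r) = Suc (right_spine r)"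

abbreviation contact_step :: "int \<Rightarrow> bool \<Rightarrow> bool" where
  "contact_step s up \<equiv> (\<not> up \<and> s = 1) \<or> (up \<and> s = 0)"

lemma count_tree_contact_step_above: "1 \<le> h \<Longrightarrow> count_tree contact_step h t = 0"
  by (induction t arbitrary: h) auto

lemma contacts_encode: "contacts (encode t) = right_spine t"
proof -
  have "contacts (encode t) = count_tree contact_step 0 t"
    using card_steps_eq_count_steps[of "encode t" contact_step 0]
    by (simp add: contacts_def count_steps_encode)
  also have "\<dots> = right_spine t"
    by (induction t) (simp_all add: count_tree_contact_step_above)
  finally show ?thesis .
qed

abbreviation odd_ups :: "int \<Rightarrow> tree \<Rightarrow> nat" where
  "odd_ups \<equiv> count_tree (\<lambda>s up. up \<and> odd s)"

lemma odd_up_steps_encode: "odd_up_steps (encode t) = odd_ups 0 t"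
  using card_steps_eq_count_steps[of "encode t" "\<lambda>s up. up \<and> odd s" 0]
  by (simp add: odd_up_steps_def count_steps_encode)

lemma odd_ups_add_shifted: "odd_ups h t + odd_ups (h + 1) t = size t"
proof (induction t arbitrary: h)
  case Leaf
  then show ?case by simp
next
  case (Node l r)
  have "odd_ups (h + 1) l + odd_ups (h + 1 + 1) l = size l" by (rule Node.IH(1))
  with Node.IH(2)[of h] show ?case by (cases "odd h") simp_all
qed

fun count_peaks :: "path \<Rightarrow> nat" where
  "count_peaks [] = 0"
| "count_peaks [x] = 0"
| "count_peaks (x # y # xs) = (if x \<and> \<not> y then 1 else 0) + count_peaks (y # xs)"

lemma card_peaks_eq_count_peaks:
  "card {i. Suc i < length p \<and> p ! i \<and> \<not> p ! Suc i} = count_peaks p"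
proof (induction p rule: count_peaks.induct)
  case (3 x y xs)
  have "card {i. Suc i < length (x # y # xs) \<and> (x # y # xs) ! i \<and> \<not> (x # y # xs) ! Suc i}
      = (if x \<and> \<not> y then 1 else 0)
        + card {i. Suc i < length (y # xs) \<and> (y # xs) ! i \<and> \<not> (y # xs) ! Suc i}"
    by (simp only: length_Cons Suc_less_eq card_less_Suc_split nth_Cons_0 nth_Cons_Suc)
  with "3.IH" show ?case by simp
qed auto

fun left_leaves :: "tree \<Rightarrow> nat" where
  "left_leaves Leaf = 0"
| "left_leaves (Node l r) = (if l = Leaf then 1 else 0) + left_leaves l + left_leaves r"

fun right_leaves :: "tree \<Rightarrow> nat" where
  "right_leaves Leaf = 0"
| "right_leaves (Node l r) = right_leaves l + right_leaves r + (if r = Leaf then 1 else 0)"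

lemma left_leaves_add_right_leaves:
  "left_leaves t + right_leaves t + (if t = Leaf then 1 else 0) = size t + 1"
  by (induction t) auto

text \<open>Every encoding ends with a down-step, so appending never creates a peak at the seam.\<close>

lemma count_peaks_encode_append: "count_peaks (encode t @ ys) = left_leaves t + count_peaks ys"
proof (induction t arbitrary: ys)
  case Leaf
  then show ?case by simp
next
  case (Node l r)
  have drop_down: "count_peaks (False # zs) = count_peaks zs" for zs
    by (cases zs) auto
  have "count_peaks (True # encode l @ False # encode r @ ys)
      = (if l = Leaf then 1 else 0) + count_peaks (encode l @ False # encode r @ ys)"
    by (cases l) auto
  with Node.IH show ?case by (simp add: drop_down)
qed

lemma peaks_encode: "peaks (encode t) = left_leaves t"
  using count_peaks_encode_append[of t "[]"] unfolding peaks_def card_peaks_eq_count_peaks by simp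

fun mirror :: "tree \<Rightarrow> tree" where
  "mirror Leaf = Leaf"
| "mirror (Node l r) = Node (mirror r) (mirror l)"

lemma mirror_mirror [simp]: "mirror (mirror t) = t"
  by (induction t) auto

lemma mirror_eq_Leaf_iff [simp]: "mirror t = Leaf \<longleftrightarrow> t = Leaf"
  by (cases t) auto

lemma left_leaves_mirror: "left_leaves (mirror t) = right_leaves t"
  by (induction t) auto

fun mirror_left :: "tree \<Rightarrow> tree" where
  "mirror_left Leaf = Leaf"
| "mirror_left (Node l r) = Node (mirror (mirror_left l)) (mirror_left r)"

lemma size_mirror_left [simp]: "size (mirror_left t) = size t"
proof -
  have "size (mirror t) = size t" for t by (induction t) auto
  then show ?thesis by (induction t) auto
qed

lemma inj_mirror_left: "inj mirror_left"
proof (rule injI)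
  show "mirror_left s = mirror_left t \<Longrightarrow> s = t" for s t
  proof (induction s arbitrary: t)
    case Leaf
    then show ?case by (cases t) auto
  next
    case (Node l r)
    then show ?case by (cases t) (auto dest: arg_cong[where f = mirror])
  qed
qed

lemma right_spine_mirror_left: "right_spine (mirror_left t) = right_spine t"
  by (induction t) auto

lemma left_leaves_mirror_left: "left_leaves (mirror_left t) = odd_ups 0 t"
proof (induction t)
  case Leaf
  then show ?case by simp
next
  case (Node l r)
  have "odd_ups 0 (Node l r) = 1 + odd_ups 1 l + odd_ups 0 r" by simp
  with Node.IH left_leaves_add_right_leaves[of "mirror_left l"] odd_ups_add_shifted[of 0 l]
  show ?case by (simp add: left_leaves_mirror)
qed

lemma bij_betw_mirror_left: "bij_betw mirror_left {t. size t = n} {t. size t = n}"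
proof -
  have "inj_on mirror_left {t. size t = n}" using inj_mirror_left by (simp add: inj_on_def inj_def)
  moreover have "mirror_left ` {t. size t = n} = {t. size t = n}"
    by (rule endo_inj_surj[OF finite_trees_of_size]) (use calculation in auto)
  ultimately show ?thesis by (simp add: bij_betw_def)
qed

lemma card_filter_bij_betw:
  assumes "bij_betw f S S"
  shows "card {x \<in> S. P (f x)} = card {x \<in> S. P x}"
proof (rule bij_betw_same_card)
  show "bij_betw f {x \<in> S. P (f x)} {x \<in> S. P x}"
    using assms by (auto simp: bij_betw_def inj_on_def)
qed

theorem corollary1:
  fixes n m k :: nat
  shows "card {p \<in> dyck_paths n. contacts p = m \<and> odd_up_steps p = k}
       = card {p \<in> dyck_paths n. contacts p = m \<and> peaks p = k}"
proof -
  have card_encode: "card (encode ` A) = card A" for A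
    using inj_encode by (simp add: card_image inj_on_def inj_def)
  have "card {p \<in> dyck_paths n. contacts p = m \<and> odd_up_steps p = k}
      = card {t \<in> {t. size t = n}. right_spine t = m \<and> odd_ups 0 t = k}"
    by (simp add: dyck_paths_filter_eq_image card_encode contacts_encode odd_up_steps_encode)
  also have "\<dots> = card {t \<in> {t. size t = n}.
                   right_spine (mirror_left t) = m \<and> left_leaves (mirror_left t) = k}"
    by (simp add: right_spine_mirror_left left_leaves_mirror_left)
  also have "\<dots> = card {t \<in> {t. size t = n}. right_spine t = m \<and> left_leaves t = k}"
    by (rule card_filter_bij_betw[OF bij_betw_mirror_left])
  also have "\<dots> = card {p \<in> dyck_paths n. contacts p = m \<and> peaks p = k}"
    by (simp add: dyck_paths_filter_eq_image card_encode contacts_encode peaks_encode)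
  finally show ?thesis .
qed

end
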